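(* For each $n \geq 2$ let $\{X_{n,i}; 1 \leq i \leq n \}$ be i.i.d. real-valued random variables such that $\mathbb{E}X_{n, 1} = 0$ and $\lim_{n \to \infty} \mathbb{E}X_{n,1}^{2} = \sigma^{2} \in (0, \infty)$. Let $\rho\ge0$, $g \in \mathcal{V}_{\rho}$, and suppose there is a sequence of positive constants $\{\tau_{n}; n \geq 2\}$ with $\lim_{n \to \infty} \tau_{n} = 0$ and $|X_{n,1}| \leq \tau_{n} \sqrt{n/g(\log n)}$ almost surely for each $n\ge2$. Then for all $r>0$, \[ \lim_{n \to \infty} \frac{\log \mathbb{P}\left(\sum_{i=1}^{n} X_{n,i} > r \sqrt{n g(\log n)} \right)}{g(\log n)} = - \frac{r^{2}}{2\sigma^{2}},\quad \lim_{n \to \infty} \frac{\log \mathbb{P}\left(\sum_{i=1}^{n} X_{n,i} < - r \sqrt{n g(\log n)} \right)}{g(\log n)} = - \frac{r^{2}}{2\sigma^{2}}, \] and \[ \lim_{n \to \infty} \frac{\log \mathbb{P}\left(\left|\sum_{i=1}^{n} X_{n,i} \right| > r \sqrt{n g(\log n)} \right)}{g(\log n)} = - \frac{r^{2}}{2\sigma^{2}}. \]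
   Context: For $\rho\ge 0$, $\mathcal{V}_{\rho}$ denotes the set of all nondecreasing functions $g:[0,\infty)\to[0,\infty)$ regularly varying at infinity with index $\rho$ (i.e. $\lim_{t\to\infty} g(xt)/g(t)=x^\rho$ for all $x>0$) with $\lim_{t\to\infty}g(t)=\infty$. $\log$ is the natural logarithm. *)

theory Defs
  imports "HOL-Probability.Probability"
begin

text \<open>The class V_rho: nondecreasing functions g : [0,inf) -> [0,inf), regularly varying
  at infinity with index rho, with g t -> infinity.  Only values on [0,inf) matter.\<close>
definition regvar_class :: "real \<Rightarrow> (real \<Rightarrow> real) \<Rightarrow> bool" where
  "regvar_class \<rho> g \<longleftrightarrow>
     mono_on {0..} g \<and> (\<forall>t\<ge>0. g t \<ge> 0) \<and>
     (\<forall>x>0. ((\<lambda>t. g (x * t) / g t) \<longlongrightarrow> x powr \<rho>) at_top) \<and>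
     filterlim g at_top at_top"

end

theory Submission
  imports Defs
begin

text \<open>Write \<open>S\<^sub>n\<close> for the row sums and \<open>G\<^sub>n = g (ln n)\<close>. The bound
  \<open>\<bar>X\<^sub>n\<^sub>,\<^sub>1\<bar> \<le> \<tau>\<^sub>n sqrt (n / G\<^sub>n)\<close> with \<open>\<tau>\<^sub>n \<longrightarrow> 0\<close> makes the second order Taylor
  expansion of the moment generating function of \<open>X\<^sub>n\<^sub>,\<^sub>1\<close> accurate at the scale
  \<open>t = \<theta> sqrt (G\<^sub>n / n)\<close>, so by independence \<open>Z\<^sub>n = sqrt (G\<^sub>n / n) S\<^sub>n\<close> satisfies
  \<open>ln E exp (\<theta> Z\<^sub>n) / G\<^sub>n \<longrightarrow> \<theta>\<^sup>2 \<sigma>\<^sup>2 / 2\<close> for every \<open>\<theta>\<close>.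

  Since \<open>G\<^sub>n \<longrightarrow> \<infinity>\<close>, this quadratic limit alone gives the tail asymptotics, by a one-dimensional
  Gaertner-Ellis argument: the Chernoff bound at \<open>\<theta> = r / \<sigma>\<^sup>2\<close> gives the upper estimate. For the
  lower one, with \<open>\<theta> = (r + \<epsilon>) / \<sigma>\<^sup>2\<close> and \<open>\<eta> = \<epsilon> / \<sigma>\<^sup>2\<close>, the neighbouring tilts
  \<open>\<theta> \<plusminus> \<eta>\<close> show that the parts of \<open>E exp (\<theta> Z\<^sub>n)\<close> coming from \<open>Z\<^sub>n \<le> r G\<^sub>n\<close> and from
  \<open>Z\<^sub>n > (r + 2\<epsilon>) G\<^sub>n\<close> are exponentially negligible, so at least half of it comes from the window
  in between.\<close>

lemma abs_exp_minus_taylor2_le: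
  fixes x :: real
  assumes "\<bar>x\<bar> \<le> 1"
  shows "\<bar>exp x - (1 + x + x\<^sup>2 / 2)\<bar> \<le> \<bar>x\<bar> ^ 3"
proof -
  obtain t where t: "\<bar>t\<bar> \<le> \<bar>x\<bar>" "exp x = (\<Sum>m<3. x ^ m / fact m) + exp t / fact 3 * x ^ 3"
    using Maclaurin_exp_le[of x 3] by blast
  have "exp t \<le> exp 1"
    using t(1) assms by simp
  also have "exp (1::real) \<le> 6"
    using exp_le by simp
  finally have "exp t * \<bar>x\<bar> ^ 3 \<le> 6 * \<bar>x\<bar> ^ 3"
    by (intro mult_right_mono) auto
  moreover have "\<bar>exp x - (1 + x + x\<^sup>2 / 2)\<bar> = exp t / 6 * \<bar>x\<bar> ^ 3"
    using t(2) by (simp add: eval_nat_numeral fact_numeral abs_mult power_abs power2_eq_square)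
  ultimately show ?thesis
    by simp
qed

lemma abs_exp_mult_minus_taylor2_le:
  fixes t x c :: real
  assumes x: "\<bar>x\<bar> \<le> c" and t: "\<bar>t\<bar> * c \<le> 1"
  shows "\<bar>exp (t * x) - 1 - t * x - t\<^sup>2 / 2 * x\<^sup>2\<bar> \<le> \<bar>t\<bar> * c * (t\<^sup>2 * x\<^sup>2)"
proof -
  have tx: "\<bar>t * x\<bar> \<le> \<bar>t\<bar> * c"
    using x by (simp add: abs_mult mult_left_mono)
  have "\<bar>exp (t * x) - 1 - t * x - t\<^sup>2 / 2 * x\<^sup>2\<bar> = \<bar>exp (t * x) - (1 + t * x + (t * x)\<^sup>2 / 2)\<bar>"
    by (simp add: algebra_simps power_mult_distrib)
  also have "\<dots> \<le> \<bar>t * x\<bar> * (t * x)\<^sup>2"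
    using abs_exp_minus_taylor2_le[of "t * x"] tx t by (simp add: power3_eq_cube power2_eq_square mult_ac)
  also have "\<dots> \<le> \<bar>t\<bar> * c * (t * x)\<^sup>2"
    using tx by (intro mult_right_mono) auto
  finally show ?thesis
    by (simp add: power_mult_distrib)
qed

lemma exp_tilt_le_indicator:
  fixes l m a a' y :: real
  assumes "0 \<le> l" "0 \<le> m" "a \<le> a'"
  shows "exp (l * y) - exp (m * a) * exp ((l - m) * y) - exp (- (m * a')) * exp ((l + m) * y)
           \<le> exp (l * a') * indicator {a<..} y"
proof -
  let ?lhs = "exp (l * y) - exp (m * a) * exp ((l - m) * y) - exp (- (m * a')) * exp ((l + m) * y)"
  have lower: "exp (m * a) * exp ((l - m) * y) = exp (l * y) * exp (m * (a - y))"
    and upper: "exp (- (m * a')) * exp ((l + m) * y) = exp (l * y) * exp (m * (y - a'))"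
    by (simp_all flip: exp_add add: algebra_simps)
  have nonneg: "0 \<le> exp (m * a) * exp ((l - m) * y)" "0 \<le> exp (- (m * a')) * exp ((l + m) * y)"
    "0 \<le> exp (l * a')"
    by simp_all
  consider "y \<le> a" | "a < y" "y \<le> a'" | "a' < y"
    by linarith
  then show ?thesis
  proof cases
    case 1
    then have "exp (l * y) \<le> exp (l * y) * exp (m * (a - y))"
      using assms by simp
    then have "?lhs \<le> 0"
      using lower nonneg by linarith
    then show ?thesis
      using 1 by simp
  next
    case 2
    then have "exp (l * y) \<le> exp (l * a')"
      using assms by (simp add: mult_left_mono)
    then have "?lhs \<le> exp (l * a')"
      using nonneg by linarith
    then show ?thesis
      using 2 by simp
  next
    case 3
    then have "exp (l * y) \<le> exp (l * y) * exp (m * (y - a'))"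
      using assms by simp
    then have "?lhs \<le> exp (l * a')"
      using upper nonneg by linarith
    then show ?thesis
      using 3 assms(3) by simp
  qed
qed

lemma tendsto_mult_ln_one_plus:
  fixes a z :: "'b \<Rightarrow> real"
  assumes z: "(z \<longlongrightarrow> 0) F" and az: "((\<lambda>n. a n * z n) \<longlongrightarrow> w) F"
  shows "((\<lambda>n. a n * ln (1 + z n)) \<longlongrightarrow> w) F"
proof -
  have "((\<lambda>n. a n * ln (1 + z n) - a n * z n) \<longlongrightarrow> 0) F"
  proof (rule Lim_null_comparison)
    have "\<forall>\<^sub>F n in F. \<bar>z n\<bar> < 1/2"
      by (rule order_tendstoD(2)[OF tendsto_rabs_zero[OF z]]) simp
    then show "\<forall>\<^sub>F n in F. norm (a n * ln (1 + z n) - a n * z n) \<le> 2 * (\<bar>a n * z n\<bar> * \<bar>z n\<bar>)"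
    proof eventually_elim
      case (elim n)
      then have "\<bar>a n\<bar> * \<bar>ln (1 + z n) - z n\<bar> \<le> \<bar>a n\<bar> * (2 * (z n)\<^sup>2)"
        by (intro mult_left_mono abs_ln_one_plus_x_minus_x_bound) auto
      then show ?case
        by (simp add: abs_mult power2_eq_square flip: right_diff_distrib)
    qed
    show "((\<lambda>n. 2 * (\<bar>a n * z n\<bar> * \<bar>z n\<bar>)) \<longlongrightarrow> 0) F"
      using tendsto_mult[OF tendsto_const tendsto_mult[OF tendsto_rabs[OF az] tendsto_rabs[OF z]], of 2]
      by simp
  qed
  then show ?thesis
    using tendsto_add[OF _ az] by fastforce
qed

lemma tendsto_ln_div_sandwich_add:
  fixes p q s b :: "'b \<Rightarrow> real"
  assumes bounds: "\<forall>\<^sub>F n in F. 0 < p n \<and> 0 < q n \<and> p n \<le> s n \<and> s n \<le> p n + q n"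
    and b: "filterlim b at_top F"
    and p: "((\<lambda>n. ln (p n) / b n) \<longlongrightarrow> L) F" and q: "((\<lambda>n. ln (q n) / b n) \<longlongrightarrow> L) F"
  shows "((\<lambda>n. ln (s n) / b n) \<longlongrightarrow> L) F"
proof (rule tendsto_sandwich)
  have b_pos: "\<forall>\<^sub>F n in F. 0 < b n"
    using b by (simp add: filterlim_at_top_dense)
  show "\<forall>\<^sub>F n in F. ln (p n) / b n \<le> ln (s n) / b n"
    using bounds b_pos by eventually_elim (simp add: divide_right_mono)
  show "\<forall>\<^sub>F n in F. ln (s n) / b n \<le> ln 2 / b n + max (ln (p n) / b n) (ln (q n) / b n)"
    using bounds b_pos
  proof eventually_elim
    case (elim n)
    then have "s n \<le> 2 * max (p n) (q n)"
      by linarith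
    then have "ln (s n) \<le> ln (2 * max (p n) (q n))"
      using elim by simp
    also have "\<dots> = ln 2 + max (ln (p n)) (ln (q n))"
      using elim by (simp add: ln_mult max_def)
    finally have "ln (s n) \<le> ln 2 + max (ln (p n)) (ln (q n))" .
    then have "ln (s n) / b n \<le> (ln 2 + max (ln (p n)) (ln (q n))) / b n"
      using elim by (simp add: divide_right_mono)
    then show ?case
      using elim by (simp add: max_divide_distrib_right add_divide_distrib)
  qed
  show "((\<lambda>n. ln 2 / b n + max (ln (p n) / b n) (ln (q n) / b n)) \<longlongrightarrow> L) F"
    using tendsto_add[OF tendsto_divide_0[OF tendsto_const filterlim_at_top_imp_at_infinity[OF b]]
        tendsto_max[OF p q]] by simp
qed (rule p)

lemma eventually_exp_mult_le_of_negative_rate: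
  fixes b x A B :: "'b \<Rightarrow> real"
  assumes b: "filterlim b at_top F" and pos: "\<forall>\<^sub>F n in F. 0 < A n \<and> 0 < B n"
    and rate: "((\<lambda>n. x n + ln (A n) / b n - ln (B n) / b n) \<longlongrightarrow> c) F" and c: "c < 0" and K: "0 < K"
  shows "\<forall>\<^sub>F n in F. exp (b n * x n) * A n \<le> K * B n"
proof -
  have "filterlim (\<lambda>n. (x n + ln (A n) / b n - ln (B n) / b n) * b n) at_bot F"
    by (rule filterlim_tendsto_neg_mult_at_bot[OF rate c b])
  then have "\<forall>\<^sub>F n in F. (x n + ln (A n) / b n - ln (B n) / b n) * b n \<le> ln K"
    by (simp add: filterlim_at_bot)
  moreover have "\<forall>\<^sub>F n in F. 0 < b n"
    using b by (simp add: filterlim_at_top_dense)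
  ultimately show ?thesis
    using pos
  proof eventually_elim
    case (elim n)
    moreover have "(x n + ln (A n) / b n - ln (B n) / b n) * b n = b n * x n + ln (A n) - ln (B n)"
      using elim by (simp add: field_simps)
    ultimately have "b n * x n + ln (A n) \<le> ln K + ln (B n)"
      by linarith
    then have "exp (b n * x n + ln (A n)) \<le> exp (ln K + ln (B n))"
      by simp
    then show ?case
      using elim K by (simp add: exp_add)
  qed
qed

lemma sqrt_scaled_less_iff:
  fixes G n r x :: real
  assumes "0 < G" "0 < n"
  shows "r * G < sqrt (G / n) * x \<longleftrightarrow> r * sqrt (n * G) < x"
    and "sqrt (G / n) * x < - (r * G) \<longleftrightarrow> x < - (r * sqrt (n * G))"
    and "r * G < \<bar>sqrt (G / n) * x\<bar> \<longleftrightarrow> r * sqrt (n * G) < \<bar>x\<bar>"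
proof -
  have "sqrt (G / n) * sqrt (n * G) = G"
    using assms by (simp add: real_sqrt_mult[symmetric])
  then have eq: "r * G = sqrt (G / n) * (r * sqrt (n * G))"
    by (simp add: mult_ac)
  have pos: "0 < sqrt (G / n)"
    using assms by simp
  show right: "r * G < sqrt (G / n) * x \<longleftrightarrow> r * sqrt (n * G) < x" for x
    using pos by (subst eq) (rule mult_less_cancel_left_pos)
  show "sqrt (G / n) * x < - (r * G) \<longleftrightarrow> x < - (r * sqrt (n * G))"
    using right[of "- x"] by linarith
  show "r * G < \<bar>sqrt (G / n) * x\<bar> \<longleftrightarrow> r * sqrt (n * G) < \<bar>x\<bar>"
    using right[of "\<bar>x\<bar>"] pos by (simp add: abs_mult)
qed

section \<open>Moderate deviations from a quadratic cumulant limit\<close>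

context prob_space
begin

lemma expectation_exp_pos:
  fixes f :: "'a \<Rightarrow> real"
  assumes "integrable M (\<lambda>\<omega>. exp (f \<omega>))"
  shows "0 < expectation (\<lambda>\<omega>. exp (f \<omega>))"
proof -
  have "expectation (\<lambda>\<omega>. exp (f \<omega>)) \<noteq> 0"
    using integral_nonneg_eq_0_iff_AE[OF assms] AE_False by simp
  moreover have "0 \<le> expectation (\<lambda>\<omega>. exp (f \<omega>))"
    by simp
  ultimately show ?thesis
    by linarith
qed

lemma ln_prob_gt_le_chernoff:
  fixes Y :: "'a \<Rightarrow> real"
  assumes Y: "random_variable borel Y" and int: "integrable M (\<lambda>\<omega>. exp (l * Y \<omega>))"
    and l: "0 \<le> l" and pos: "0 < prob {\<omega> \<in> space M. a < Y \<omega>}"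
  shows "ln (prob {\<omega> \<in> space M. a < Y \<omega>}) \<le> ln (expectation (\<lambda>\<omega>. exp (l * Y \<omega>))) - l * a"
proof -
  let ?A = "{\<omega> \<in> space M. a < Y \<omega>}"
  have A: "?A \<in> events"
    using Y by measurable
  have "exp (l * a) * prob ?A = expectation (\<lambda>\<omega>. exp (l * a) * indicator ?A \<omega>)"
    using A by simp
  also have "\<dots> \<le> expectation (\<lambda>\<omega>. exp (l * Y \<omega>))"
  proof (rule integral_mono)
    fix \<omega> assume "\<omega> \<in> space M"
    then show "exp (l * a) * indicator ?A \<omega> \<le> exp (l * Y \<omega>)"
      using l by (auto simp: indicator_def mult_left_mono)
  qed (use A int in \<open>auto simp: less_top[symmetric]\<close>)
  finally have "ln (exp (l * a) * prob ?A) \<le> ln (expectation (\<lambda>\<omega>. exp (l * Y \<omega>)))"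
    using pos by (intro ln_mono) auto
  then show ?thesis
    using pos by (simp add: ln_mult)
qed

lemma expectation_exp_tilt_le_prob:
  fixes Y :: "'a \<Rightarrow> real"
  assumes Y: "random_variable borel Y" and int: "\<And>k. integrable M (\<lambda>\<omega>. exp (k * Y \<omega>))"
    and lma: "0 \<le> l" "0 \<le> m" "a \<le> a'"
  shows "expectation (\<lambda>\<omega>. exp (l * Y \<omega>))
           - exp (m * a) * expectation (\<lambda>\<omega>. exp ((l - m) * Y \<omega>))
           - exp (- (m * a')) * expectation (\<lambda>\<omega>. exp ((l + m) * Y \<omega>))
         \<le> exp (l * a') * prob {\<omega> \<in> space M. a < Y \<omega>}"
proof -
  let ?A = "{\<omega> \<in> space M. a < Y \<omega>}"
  have A: "?A \<in> events"
    using Y by measurable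
  have "expectation (\<lambda>\<omega>. exp (l * Y \<omega>))
          - exp (m * a) * expectation (\<lambda>\<omega>. exp ((l - m) * Y \<omega>))
          - exp (- (m * a')) * expectation (\<lambda>\<omega>. exp ((l + m) * Y \<omega>))
        = expectation (\<lambda>\<omega>. exp (l * Y \<omega>) - exp (m * a) * exp ((l - m) * Y \<omega>)
                              - exp (- (m * a')) * exp ((l + m) * Y \<omega>))"
    using int by simp
  also have "\<dots> \<le> expectation (\<lambda>\<omega>. exp (l * a') * indicator ?A \<omega>)"
  proof (rule integral_mono)
    fix \<omega> assume "\<omega> \<in> space M"
    then show "exp (l * Y \<omega>) - exp (m * a) * exp ((l - m) * Y \<omega>) - exp (- (m * a')) * exp ((l + m) * Y \<omega>)
               \<le> exp (l * a') * indicator ?A \<omega>"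
      using exp_tilt_le_indicator[OF lma, of "Y \<omega>"] by (simp add: indicator_def)
  qed (use A int in \<open>auto simp: less_top[symmetric]\<close>)
  also have "\<dots> = exp (l * a') * prob ?A"
    using A by simp
  finally show ?thesis .
qed

lemma ln_prob_gt_ge_tilted:
  fixes Y :: "'a \<Rightarrow> real"
  assumes Y: "random_variable borel Y" and int: "\<And>k. integrable M (\<lambda>\<omega>. exp (k * Y \<omega>))"
    and lma: "0 \<le> l" "0 \<le> m" "a \<le> a'"
    and below: "exp (m * a) * expectation (\<lambda>\<omega>. exp ((l - m) * Y \<omega>)) \<le> expectation (\<lambda>\<omega>. exp (l * Y \<omega>)) / 4"
    and above: "exp (- (m * a')) * expectation (\<lambda>\<omega>. exp ((l + m) * Y \<omega>))
                  \<le> expectation (\<lambda>\<omega>. exp (l * Y \<omega>)) / 4"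
  shows "0 < prob {\<omega> \<in> space M. a < Y \<omega>}"
    and "ln (expectation (\<lambda>\<omega>. exp (l * Y \<omega>))) - ln 2 - l * a' \<le> ln (prob {\<omega> \<in> space M. a < Y \<omega>})"
proof -
  let ?E = "expectation (\<lambda>\<omega>. exp (l * Y \<omega>))" and ?P = "prob {\<omega> \<in> space M. a < Y \<omega>}"
  have half: "?E / 2 \<le> exp (l * a') * ?P"
    using expectation_exp_tilt_le_prob[OF Y int lma] below above by linarith
  have E_pos: "0 < ?E"
    by (rule expectation_exp_pos[OF int])
  with half have "0 < exp (l * a') * ?P"
    by linarith
  then show P_pos: "0 < ?P"
    by (simp add: zero_less_mult_iff)
  show "ln ?E - ln 2 - l * a' \<le> ln ?P"
    using ln_mono[OF half] E_pos P_pos by (simp add: ln_div ln_mult)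
qed

end

locale quadratic_cgf_limit = prob_space +
  fixes Z :: "'i \<Rightarrow> 'a \<Rightarrow> real" and F :: "'i filter" and b :: "'i \<Rightarrow> real" and v :: real
  assumes Z: "\<forall>\<^sub>F n in F. random_variable borel (Z n) \<and> (\<forall>\<theta>. integrable M (\<lambda>\<omega>. exp (\<theta> * Z n \<omega>)))"
    and b: "filterlim b at_top F"
    and cgf: "\<And>\<theta>. ((\<lambda>n. ln (expectation (\<lambda>\<omega>. exp (\<theta> * Z n \<omega>))) / b n) \<longlongrightarrow> \<theta>\<^sup>2 * v / 2) F"
    and v: "0 < v"
begin

lemma expectation_exp_tilt_negligible:
  assumes neg: "c + \<theta>'\<^sup>2 * v / 2 - \<theta>\<^sup>2 * v / 2 < 0"
  shows "\<forall>\<^sub>F n in F. exp (b n * c) * expectation (\<lambda>\<omega>. exp (\<theta>' * Z n \<omega>))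
                     \<le> 1 / 4 * expectation (\<lambda>\<omega>. exp (\<theta> * Z n \<omega>))"
proof (rule eventually_exp_mult_le_of_negative_rate[OF b _ _ neg])
  show "\<forall>\<^sub>F n in F. 0 < expectation (\<lambda>\<omega>. exp (\<theta>' * Z n \<omega>)) \<and> 0 < expectation (\<lambda>\<omega>. exp (\<theta> * Z n \<omega>))"
    using Z by eventually_elim (simp add: expectation_exp_pos)
  show "((\<lambda>n. c + ln (expectation (\<lambda>\<omega>. exp (\<theta>' * Z n \<omega>))) / b n
                 - ln (expectation (\<lambda>\<omega>. exp (\<theta> * Z n \<omega>))) / b n)
          \<longlongrightarrow> c + \<theta>'\<^sup>2 * v / 2 - \<theta>\<^sup>2 * v / 2) F"
    by (intro tendsto_intros cgf)
qed simp

lemma ldp_lower_estimate: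
  assumes r: "0 < r" and \<epsilon>: "0 < \<epsilon>" and y: "y < - (r + \<epsilon>) * (r + 3 * \<epsilon>) / (2 * v)"
  shows "\<forall>\<^sub>F n in F. 0 < prob {\<omega> \<in> space M. r * b n < Z n \<omega>}
           \<and> y < ln (prob {\<omega> \<in> space M. r * b n < Z n \<omega>}) / b n"
proof -
  define \<theta> where "\<theta> = (r + \<epsilon>) / v"
  define \<eta> where "\<eta> = \<epsilon> / v"
  define E where "E n k = expectation (\<lambda>\<omega>. exp (k * Z n \<omega>))" for n k
  have below: "\<eta> * r + (\<theta> - \<eta>)\<^sup>2 * v / 2 - \<theta>\<^sup>2 * v / 2 < 0"
    and above: "- \<eta> * (r + 2 * \<epsilon>) + (\<theta> + \<eta>)\<^sup>2 * v / 2 - \<theta>\<^sup>2 * v / 2 < 0"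
    using v \<epsilon> by (simp_all add: \<theta>_def \<eta>_def field_simps power2_eq_square)
  note negligible = expectation_exp_tilt_negligible[folded E_def]
  have "((\<lambda>n. ln (E n \<theta>) / b n - ln 2 / b n - \<theta> * (r + 2 * \<epsilon>)) \<longlongrightarrow> \<theta>\<^sup>2 * v / 2 - 0 - \<theta> * (r + 2 * \<epsilon>)) F"
    unfolding E_def
    by (intro tendsto_intros cgf tendsto_divide_0[OF tendsto_const filterlim_at_top_imp_at_infinity[OF b]])
  moreover have "\<theta>\<^sup>2 * v / 2 - 0 - \<theta> * (r + 2 * \<epsilon>) = - (r + \<epsilon>) * (r + 3 * \<epsilon>) / (2 * v)"
    using v by (simp add: \<theta>_def field_simps power2_eq_square)
  ultimately have "\<forall>\<^sub>F n in F. y < ln (E n \<theta>) / b n - ln 2 / b n - \<theta> * (r + 2 * \<epsilon>)"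
    using y by (auto intro: order_tendstoD(1))
  moreover have "\<forall>\<^sub>F n in F. 0 < b n"
    using b by (simp add: filterlim_at_top_dense)
  ultimately show ?thesis
    using Z negligible[OF below] negligible[OF above]
  proof eventually_elim
    case (elim n)
    let ?P = "prob {\<omega> \<in> space M. r * b n < Z n \<omega>}"
    have "0 \<le> \<theta>" "0 \<le> \<eta>" "r * b n \<le> (r + 2 * \<epsilon>) * b n"
      using v r \<epsilon> elim(2) by (simp_all add: \<theta>_def \<eta>_def)
    moreover have "exp (\<eta> * (r * b n)) * E n (\<theta> - \<eta>) \<le> E n \<theta> / 4"
      and "exp (- (\<eta> * ((r + 2 * \<epsilon>) * b n))) * E n (\<theta> + \<eta>) \<le> E n \<theta> / 4"
      using elim(4,5) by (simp_all add: mult_ac)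
    ultimately have "0 < ?P" and "ln (E n \<theta>) - ln 2 - \<theta> * ((r + 2 * \<epsilon>) * b n) \<le> ln ?P"
      using elim(3) unfolding E_def by (intro ln_prob_gt_ge_tilted; blast)+
    moreover from this(2) have "(ln (E n \<theta>) - ln 2 - \<theta> * ((r + 2 * \<epsilon>) * b n)) / b n \<le> ln ?P / b n"
      using elim(2) by (simp add: divide_right_mono)
    ultimately show ?case
      using elim(1,2) by (simp add: diff_divide_distrib)
  qed
qed

lemma ldp_upper_estimate:
  assumes r: "0 < r" and y: "- r\<^sup>2 / (2 * v) < y"
  shows "\<forall>\<^sub>F n in F. 0 < prob {\<omega> \<in> space M. r * b n < Z n \<omega>}
           \<longrightarrow> ln (prob {\<omega> \<in> space M. r * b n < Z n \<omega>}) / b n < y"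
proof -
  let ?E = "\<lambda>n. expectation (\<lambda>\<omega>. exp (r / v * Z n \<omega>))"
  have "((\<lambda>n. ln (?E n) / b n - r / v * r) \<longlongrightarrow> (r / v)\<^sup>2 * v / 2 - r / v * r) F"
    by (intro tendsto_intros cgf)
  moreover have "(r / v)\<^sup>2 * v / 2 - r / v * r = - r\<^sup>2 / (2 * v)"
    using v by (simp add: field_simps power2_eq_square)
  ultimately have "\<forall>\<^sub>F n in F. ln (?E n) / b n - r / v * r < y"
    using y by (auto intro: order_tendstoD(2))
  moreover have "\<forall>\<^sub>F n in F. 0 < b n"
    using b by (simp add: filterlim_at_top_dense)
  ultimately show ?thesis
    using Z
  proof eventually_elim
    case (elim n)
    show ?case
    proof
      assume pos: "0 < prob {\<omega> \<in> space M. r * b n < Z n \<omega>}"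
      have Zn: "random_variable borel (Z n)" "integrable M (\<lambda>\<omega>. exp (r / v * Z n \<omega>))"
        using elim by blast+
      have "ln (prob {\<omega> \<in> space M. r * b n < Z n \<omega>}) \<le> ln (?E n) - r / v * (r * b n)"
        using v r pos by (intro ln_prob_gt_le_chernoff[OF Zn]) auto
      then have "ln (prob {\<omega> \<in> space M. r * b n < Z n \<omega>}) / b n \<le> (ln (?E n) - r / v * (r * b n)) / b n"
        using elim by (simp add: divide_right_mono)
      then show "ln (prob {\<omega> \<in> space M. r * b n < Z n \<omega>}) / b n < y"
        using elim by (simp add: diff_divide_distrib)
    qed
  qed
qed

theorem ldp_right_tail:
  assumes r: "0 < r"
  shows "\<forall>\<^sub>F n in F. 0 < prob {\<omega> \<in> space M. r * b n < Z n \<omega>}"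
    and "((\<lambda>n. ln (prob {\<omega> \<in> space M. r * b n < Z n \<omega>}) / b n) \<longlongrightarrow> - r\<^sup>2 / (2 * v)) F"
proof -
  let ?P = "\<lambda>n. prob {\<omega> \<in> space M. r * b n < Z n \<omega>}"
  note lower = ldp_lower_estimate[OF r]
  have "\<forall>\<^sub>F n in F. 0 < ?P n \<and> - (r + 1) * (r + 3) / (2 * v) - 1 < ln (?P n) / b n"
    by (rule lower[of 1]) simp_all
  then show pos: "\<forall>\<^sub>F n in F. 0 < ?P n"
    by eventually_elim simp
  show "((\<lambda>n. ln (?P n) / b n) \<longlongrightarrow> - r\<^sup>2 / (2 * v)) F"
  proof (rule order_tendstoI)
    fix y
    assume "y < - r\<^sup>2 / (2 * v)"
    moreover have "((\<lambda>\<epsilon>. - (r + \<epsilon>) * (r + 3 * \<epsilon>) / (2 * v)) \<longlongrightarrow> - r\<^sup>2 / (2 * v)) (at_right 0)"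
      using v by (auto intro!: tendsto_eq_intros simp: power2_eq_square)
    ultimately have "\<forall>\<^sub>F \<epsilon> in at_right 0. 0 < \<epsilon> \<and> y < - (r + \<epsilon>) * (r + 3 * \<epsilon>) / (2 * v)"
      by (auto intro: eventually_conj eventually_at_right_less order_tendstoD(1))
    then obtain \<epsilon> where \<epsilon>: "0 < \<epsilon>" "y < - (r + \<epsilon>) * (r + 3 * \<epsilon>) / (2 * v)"
      using eventually_happens'[OF trivial_limit_at_right_real] by blast
    from lower[OF this] show "\<forall>\<^sub>F n in F. y < ln (?P n) / b n"
      by eventually_elim simp
  next
    fix y
    assume "- r\<^sup>2 / (2 * v) < y"
    from ldp_upper_estimate[OF r this] pos
    show "\<forall>\<^sub>F n in F. ln (?P n) / b n < y"
      by eventually_elim blast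
  qed
qed

corollary ldp_left_tail:
  assumes r: "0 < r"
  shows "\<forall>\<^sub>F n in F. 0 < prob {\<omega> \<in> space M. Z n \<omega> < - r * b n}"
    and "((\<lambda>n. ln (prob {\<omega> \<in> space M. Z n \<omega> < - r * b n}) / b n) \<longlongrightarrow> - r\<^sup>2 / (2 * v)) F"
proof -
  have "\<forall>\<^sub>F n in F. random_variable borel (\<lambda>\<omega>. - Z n \<omega>) \<and> (\<forall>\<theta>. integrable M (\<lambda>\<omega>. exp (\<theta> * - Z n \<omega>)))"
    using Z
  proof eventually_elim
    case (elim n)
    have "integrable M (\<lambda>\<omega>. exp (\<theta> * - Z n \<omega>))" for \<theta>
      using elim[THEN conjunct2, rule_format, of "- \<theta>"] by simp
    then show ?case
      using elim by simp
  qed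
  moreover have "((\<lambda>n. ln (expectation (\<lambda>\<omega>. exp (\<theta> * - Z n \<omega>))) / b n) \<longlongrightarrow> \<theta>\<^sup>2 * v / 2) F" for \<theta>
    using cgf[of "- \<theta>"] by simp
  ultimately interpret neg: quadratic_cgf_limit M "\<lambda>n \<omega>. - Z n \<omega>" F b v
    using b v by unfold_locales
  have "{\<omega> \<in> space M. r * b n < - Z n \<omega>} = {\<omega> \<in> space M. Z n \<omega> < - r * b n}" for n
    by auto
  then show "\<forall>\<^sub>F n in F. 0 < prob {\<omega> \<in> space M. Z n \<omega> < - r * b n}"
    and "((\<lambda>n. ln (prob {\<omega> \<in> space M. Z n \<omega> < - r * b n}) / b n) \<longlongrightarrow> - r\<^sup>2 / (2 * v)) F"
    using neg.ldp_right_tail[OF r] by simp_all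
qed

corollary ldp_abs:
  assumes r: "0 < r"
  shows "((\<lambda>n. ln (prob {\<omega> \<in> space M. r * b n < \<bar>Z n \<omega>\<bar>}) / b n) \<longlongrightarrow> - r\<^sup>2 / (2 * v)) F"
proof (rule tendsto_ln_div_sandwich_add[OF _ b ldp_right_tail(2)[OF r]
         ldp_left_tail(2)[OF r]])
  show "\<forall>\<^sub>F n in F. 0 < prob {\<omega> \<in> space M. r * b n < Z n \<omega>} \<and> 0 < prob {\<omega> \<in> space M. Z n \<omega> < - r * b n}
      \<and> prob {\<omega> \<in> space M. r * b n < Z n \<omega>} \<le> prob {\<omega> \<in> space M. r * b n < \<bar>Z n \<omega>\<bar>}
      \<and> prob {\<omega> \<in> space M. r * b n < \<bar>Z n \<omega>\<bar>}
          \<le> prob {\<omega> \<in> space M. r * b n < Z n \<omega>} + prob {\<omega> \<in> space M. Z n \<omega> < - r * b n}"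
    using ldp_right_tail(1)[OF r] ldp_left_tail(1)[OF r] Z
  proof eventually_elim
    case (elim n)
    then have [measurable]: "Z n \<in> borel_measurable M"
      by simp
    have "prob {\<omega> \<in> space M. r * b n < \<bar>Z n \<omega>\<bar>}
          \<le> prob ({\<omega> \<in> space M. r * b n < Z n \<omega>} \<union> {\<omega> \<in> space M. Z n \<omega> < - r * b n})"
      by (intro finite_measure_mono) auto
    also have "\<dots> \<le> prob {\<omega> \<in> space M. r * b n < Z n \<omega>} + prob {\<omega> \<in> space M. Z n \<omega> < - r * b n}"
      by (intro measure_subadditive) auto
    finally show ?case
      using elim by (auto intro!: finite_measure_mono)
  qed
qed

end

section \<open>Triangular arrays of bounded centred variables\<close>

context prob_space
begin

lemma integrable_comp_of_AE_bounded:
  fixes X :: "'a \<Rightarrow> real" and f :: "real \<Rightarrow> real"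
  assumes X: "random_variable borel X" and c: "AE \<omega> in M. \<bar>X \<omega>\<bar> \<le> c"
    and f: "f \<in> borel_measurable borel" and B: "\<And>x. \<bar>x\<bar> \<le> c \<Longrightarrow> \<bar>f x\<bar> \<le> B"
  shows "integrable M (\<lambda>\<omega>. f (X \<omega>))"
proof (rule integrable_const_bound)
  show "AE \<omega> in M. norm (f (X \<omega>)) \<le> B"
    using c by eventually_elim (simp add: B)
qed (use measurable_compose[OF X f] in simp)

lemma integrable_exp_mult_of_AE_bounded:
  fixes X :: "'a \<Rightarrow> real"
  assumes X: "random_variable borel X" and c: "AE \<omega> in M. \<bar>X \<omega>\<bar> \<le> c"
  shows "integrable M (\<lambda>\<omega>. exp (t * X \<omega>))"
proof (rule integrable_comp_of_AE_bounded[OF X c, where B = "exp (\<bar>t\<bar> * c)"])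
  fix x :: real
  assume "\<bar>x\<bar> \<le> c"
  have "t * x \<le> \<bar>t\<bar> * \<bar>x\<bar>"
    using abs_ge_self[of "t * x"] by (simp add: abs_mult)
  also have "\<dots> \<le> \<bar>t\<bar> * c"
    using \<open>\<bar>x\<bar> \<le> c\<close> by (simp add: mult_left_mono)
  finally have "t * x \<le> \<bar>t\<bar> * c" .
  then show "\<bar>exp (t * x)\<bar> \<le> exp (\<bar>t\<bar> * c)"
    by simp
qed simp

lemma second_moment_le_sq:
  fixes X :: "'a \<Rightarrow> real"
  assumes X: "random_variable borel X" and c: "AE \<omega> in M. \<bar>X \<omega>\<bar> \<le> c"
  shows "expectation (\<lambda>\<omega>. (X \<omega>)\<^sup>2) \<le> c\<^sup>2"
proof -
  have sq: "x\<^sup>2 \<le> c\<^sup>2" if "\<bar>x\<bar> \<le> c" for x :: real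
    using power_mono[OF that, of 2] by simp
  have "expectation (\<lambda>\<omega>. (X \<omega>)\<^sup>2) \<le> expectation (\<lambda>\<omega>. c\<^sup>2)"
  proof (rule integral_mono_AE)
    show "integrable M (\<lambda>\<omega>. (X \<omega>)\<^sup>2)"
      by (rule integrable_comp_of_AE_bounded[OF X c]) (auto intro: sq)
  qed (use c sq in \<open>auto elim: eventually_mono\<close>)
  then show ?thesis
    by (simp add: prob_space)
qed

lemma mgf_centered_bounded:
  fixes X :: "'a \<Rightarrow> real"
  assumes X: "random_variable borel X" and mean: "expectation X = 0"
    and c: "AE \<omega> in M. \<bar>X \<omega>\<bar> \<le> c" and t: "\<bar>t\<bar> * c \<le> 1"
  shows "\<bar>expectation (\<lambda>\<omega>. exp (t * X \<omega>)) - 1 - t\<^sup>2 * expectation (\<lambda>\<omega>. (X \<omega>)\<^sup>2) / 2\<bar>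
           \<le> \<bar>t\<bar> * c * (t\<^sup>2 * expectation (\<lambda>\<omega>. (X \<omega>)\<^sup>2))"
proof -
  define h where "h x = exp (t * x) - 1 - t * x - t\<^sup>2 / 2 * x\<^sup>2" for x
  have int_exp: "integrable M (\<lambda>\<omega>. exp (t * X \<omega>))"
    by (rule integrable_exp_mult_of_AE_bounded[OF X c])
  have int_X: "integrable M X"
    using integrable_comp_of_AE_bounded[OF X c, of "\<lambda>x. x" c] by simp
  have int_sq: "integrable M (\<lambda>\<omega>. (X \<omega>)\<^sup>2)"
    using integrable_comp_of_AE_bounded[OF X c, of "\<lambda>x. x\<^sup>2" "c\<^sup>2"] power_mono[of "\<bar>_\<bar>" c 2]
    by simp
  have "\<bar>expectation (\<lambda>\<omega>. exp (t * X \<omega>)) - 1 - t\<^sup>2 * expectation (\<lambda>\<omega>. (X \<omega>)\<^sup>2) / 2\<bar>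
        = \<bar>expectation (\<lambda>\<omega>. h (X \<omega>))\<bar>"
    using int_exp int_X int_sq mean unfolding h_def by (simp add: prob_space)
  also have "\<dots> \<le> expectation (\<lambda>\<omega>. \<bar>t\<bar> * c * (t\<^sup>2 * (X \<omega>)\<^sup>2))"
  proof (rule order_trans[OF integral_abs_bound integral_mono_AE])
    show "AE \<omega> in M. \<bar>h (X \<omega>)\<bar> \<le> \<bar>t\<bar> * c * (t\<^sup>2 * (X \<omega>)\<^sup>2)"
      using c by eventually_elim (unfold h_def, rule abs_exp_mult_minus_taylor2_le[OF _ t])
  qed (use int_exp int_X int_sq in \<open>auto simp: h_def\<close>)
  also have "\<dots> = \<bar>t\<bar> * c * (t\<^sup>2 * expectation (\<lambda>\<omega>. (X \<omega>)\<^sup>2))"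
    by simp
  finally show ?thesis .
qed

lemma mgf_centered_bounded_minus_one:
  fixes X :: "'a \<Rightarrow> real"
  assumes X: "random_variable borel X" and mean: "expectation X = 0"
    and c: "AE \<omega> in M. \<bar>X \<omega>\<bar> \<le> c" and t: "\<bar>t\<bar> * c \<le> 1"
  shows "\<bar>expectation (\<lambda>\<omega>. exp (t * X \<omega>)) - 1\<bar> \<le> 3 / 2 * (\<bar>t\<bar> * c)\<^sup>2"
proof -
  let ?v = "expectation (\<lambda>\<omega>. (X \<omega>)\<^sup>2)"
  have "0 \<le> t\<^sup>2 * ?v"
    by simp
  moreover have "t\<^sup>2 * ?v \<le> (\<bar>t\<bar> * c)\<^sup>2"
    using mult_left_mono[OF second_moment_le_sq[OF X c], of "t\<^sup>2"] by (simp add: power_mult_distrib)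
  moreover have "\<bar>t\<bar> * c * (t\<^sup>2 * ?v) \<le> t\<^sup>2 * ?v"
    using mult_right_mono[OF t \<open>0 \<le> t\<^sup>2 * ?v\<close>] by simp
  ultimately show ?thesis
    using mgf_centered_bounded[OF X mean c t] by linarith
qed

lemma mgf_centered_bounded_scaled:
  fixes X :: "'a \<Rightarrow> real"
  assumes X: "random_variable borel X" and mean: "expectation X = 0"
    and bound: "AE \<omega> in M. \<bar>X \<omega>\<bar> \<le> \<tau> / s" and s: "0 < s" and \<theta>\<tau>: "\<bar>\<theta>\<bar> * \<tau> \<le> 1"
  defines "z \<equiv> expectation (\<lambda>\<omega>. exp (\<theta> * s * X \<omega>)) - 1" and "v \<equiv> expectation (\<lambda>\<omega>. (X \<omega>)\<^sup>2)"
  shows "\<bar>z / s\<^sup>2 - \<theta>\<^sup>2 * v / 2\<bar> \<le> \<bar>\<theta>\<bar> * \<tau> * (\<theta>\<^sup>2 * v)"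
    and "\<bar>z\<bar> \<le> 3 / 2 * (\<bar>\<theta>\<bar> * \<tau>)\<^sup>2"
proof -
  have scale: "\<bar>\<theta> * s\<bar> * (\<tau> / s) = \<bar>\<theta>\<bar> * \<tau>"
    using s by (simp add: abs_mult)
  note mgf = mgf_centered_bounded[OF X mean bound, of "\<theta> * s", unfolded scale, OF \<theta>\<tau>]
    mgf_centered_bounded_minus_one[OF X mean bound, of "\<theta> * s", unfolded scale, OF \<theta>\<tau>]
  have "z / s\<^sup>2 - \<theta>\<^sup>2 * v / 2 = (z - (\<theta> * s)\<^sup>2 * v / 2) / s\<^sup>2"
    using s by (simp add: field_simps power_mult_distrib)
  then have "\<bar>z / s\<^sup>2 - \<theta>\<^sup>2 * v / 2\<bar> = \<bar>z - (\<theta> * s)\<^sup>2 * v / 2\<bar> / s\<^sup>2"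
    by (simp add: abs_divide)
  also have "\<dots> \<le> \<bar>\<theta>\<bar> * \<tau> * ((\<theta> * s)\<^sup>2 * v) / s\<^sup>2"
    using mgf(1) by (intro divide_right_mono) (simp_all add: z_def v_def)
  also have "\<dots> = \<bar>\<theta>\<bar> * \<tau> * (\<theta>\<^sup>2 * v)"
    using s by (simp add: power_mult_distrib)
  finally show "\<bar>z / s\<^sup>2 - \<theta>\<^sup>2 * v / 2\<bar> \<le> \<bar>\<theta>\<bar> * \<tau> * (\<theta>\<^sup>2 * v)" .
  show "\<bar>z\<bar> \<le> 3 / 2 * (\<bar>\<theta>\<bar> * \<tau>)\<^sup>2"
    using mgf(2) by (simp add: z_def)
qed

lemma expectation_exp_sum_iid:
  fixes X :: "'i \<Rightarrow> 'a \<Rightarrow> real" and Y :: "'a \<Rightarrow> real"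
  assumes I: "finite I" and indep: "indep_vars (\<lambda>_. borel) X I"
    and ident: "\<And>i. i \<in> I \<Longrightarrow> distr M borel (X i) = distr M borel Y"
    and Y: "random_variable borel Y" and int: "integrable M (\<lambda>\<omega>. exp (t * Y \<omega>))"
  shows "integrable M (\<lambda>\<omega>. exp (t * (\<Sum>i\<in>I. X i \<omega>)))"
    and "expectation (\<lambda>\<omega>. exp (t * (\<Sum>i\<in>I. X i \<omega>))) = expectation (\<lambda>\<omega>. exp (t * Y \<omega>)) ^ card I"
proof -
  have exp_sum: "exp (t * (\<Sum>i\<in>I. X i \<omega>)) = (\<Prod>i\<in>I. exp (t * X i \<omega>))" for \<omega>
    by (simp add: sum_distrib_left exp_sum I)
  have indep_exp: "indep_vars (\<lambda>_. borel) (\<lambda>i \<omega>. exp (t * X i \<omega>)) I"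
    by (rule indep_vars_compose2[OF indep]) auto
  have same_law: "integrable M (\<lambda>\<omega>. exp (t * X i \<omega>))
      \<and> expectation (\<lambda>\<omega>. exp (t * X i \<omega>)) = expectation (\<lambda>\<omega>. exp (t * Y \<omega>))" if i: "i \<in> I" for i
  proof -
    have Xi: "random_variable borel (X i)"
      using indep i unfolding indep_vars_def by blast
    show ?thesis
      using integrable_distr_eq[OF Xi, of "\<lambda>x. exp (t * x)"] integrable_distr_eq[OF Y, of "\<lambda>x. exp (t * x)"]
        integral_distr[OF Xi, of "\<lambda>x. exp (t * x)"] integral_distr[OF Y, of "\<lambda>x. exp (t * x)"]
        ident[OF i] int
      by simp
  qed
  show "integrable M (\<lambda>\<omega>. exp (t * (\<Sum>i\<in>I. X i \<omega>)))"
    unfolding exp_sum using indep_vars_integrable[OF I indep_exp] same_law by blast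
  have "expectation (\<lambda>\<omega>. exp (t * (\<Sum>i\<in>I. X i \<omega>))) = (\<Prod>i\<in>I. expectation (\<lambda>\<omega>. exp (t * X i \<omega>)))"
    unfolding exp_sum using indep_vars_lebesgue_integral[OF I indep_exp] same_law by blast
  also have "\<dots> = expectation (\<lambda>\<omega>. exp (t * Y \<omega>)) ^ card I"
    using same_law by simp
  finally show "expectation (\<lambda>\<omega>. exp (t * (\<Sum>i\<in>I. X i \<omega>))) = expectation (\<lambda>\<omega>. exp (t * Y \<omega>)) ^ card I" .
qed

lemma triangular_array_row_mgf:
  fixes X :: "nat \<Rightarrow> nat \<Rightarrow> 'a \<Rightarrow> real" and c :: "nat \<Rightarrow> real"
  assumes indep: "\<And>n. 2 \<le> n \<Longrightarrow> indep_vars (\<lambda>_. borel) (X n) {1..n}"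
    and ident: "\<And>n i. 2 \<le> n \<Longrightarrow> i \<in> {1..n} \<Longrightarrow> distr M borel (X n i) = distr M borel (X n 1)"
    and bound: "\<And>n. 2 \<le> n \<Longrightarrow> AE \<omega> in M. \<bar>X n 1 \<omega>\<bar> \<le> c n"
  shows "\<forall>\<^sub>F n in sequentially. random_variable borel (\<lambda>\<omega>. s n * (\<Sum>i=1..n. X n i \<omega>))
           \<and> (\<forall>\<theta>. integrable M (\<lambda>\<omega>. exp (\<theta> * (s n * (\<Sum>i=1..n. X n i \<omega>)))))"
    and "2 \<le> n \<Longrightarrow> expectation (\<lambda>\<omega>. exp (t * (\<Sum>i=1..n. X n i \<omega>))) = expectation (\<lambda>\<omega>. exp (t * X n 1 \<omega>)) ^ n"
proof -
  have X: "random_variable borel (X n i)" if "2 \<le> n" "i \<in> {1..n}" for n i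
    using indep[OF that(1)] that(2) unfolding indep_vars_def by blast
  note row = expectation_exp_sum_iid[OF finite_atLeastAtMost indep ident X
      integrable_exp_mult_of_AE_bounded[OF X bound]]
  show "\<forall>\<^sub>F n in sequentially. random_variable borel (\<lambda>\<omega>. s n * (\<Sum>i=1..n. X n i \<omega>))
          \<and> (\<forall>\<theta>. integrable M (\<lambda>\<omega>. exp (\<theta> * (s n * (\<Sum>i=1..n. X n i \<omega>)))))"
    using eventually_ge_at_top[of 2]
  proof eventually_elim
    case (elim n)
    have "integrable M (\<lambda>\<omega>. exp (\<theta> * (s n * (\<Sum>i=1..n. X n i \<omega>))))" for \<theta>
      using row(1)[of n "\<theta> * s n"] elim by (simp add: mult.assoc)
    then show ?case
      using X[OF elim] by auto
  qed
  show "2 \<le> n \<Longrightarrow> expectation (\<lambda>\<omega>. exp (t * (\<Sum>i=1..n. X n i \<omega>))) = expectation (\<lambda>\<omega>. exp (t * X n 1 \<omega>)) ^ n"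
    using row(2)[of n t] by simp
qed

lemma triangular_array_cgf_limit:
  fixes X :: "nat \<Rightarrow> nat \<Rightarrow> 'a \<Rightarrow> real" and G \<tau> :: "nat \<Rightarrow> real"
  assumes indep: "\<And>n. 2 \<le> n \<Longrightarrow> indep_vars (\<lambda>_. borel) (X n) {1..n}"
    and ident: "\<And>n i. 2 \<le> n \<Longrightarrow> i \<in> {1..n} \<Longrightarrow> distr M borel (X n i) = distr M borel (X n 1)"
    and mean0: "\<And>n. 2 \<le> n \<Longrightarrow> expectation (X n 1) = 0"
    and var: "((\<lambda>n. expectation (\<lambda>\<omega>. (X n 1 \<omega>)\<^sup>2)) \<longlongrightarrow> \<sigma>\<^sup>2) sequentially"
    and G: "filterlim G at_top sequentially" and \<tau>: "\<tau> \<longlonglongrightarrow> 0"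
    and bound: "\<And>n. 2 \<le> n \<Longrightarrow> AE \<omega> in M. \<bar>X n 1 \<omega>\<bar> \<le> \<tau> n * sqrt (n / G n)"
  shows "((\<lambda>n. ln (expectation (\<lambda>\<omega>. exp (\<theta> * (sqrt (G n / n) * (\<Sum>i=1..n. X n i \<omega>))))) / G n)
           \<longlongrightarrow> \<theta>\<^sup>2 * \<sigma>\<^sup>2 / 2) sequentially"
proof -
  have X1: "random_variable borel (X n 1)" if "2 \<le> n" for n
    using indep[OF that] that unfolding indep_vars_def by auto
  have row_mgf: "expectation (\<lambda>\<omega>. exp (t * (\<Sum>i=1..n. X n i \<omega>))) = expectation (\<lambda>\<omega>. exp (t * X n 1 \<omega>)) ^ n"
    if "2 \<le> n" for n t
    using indep ident bound that by (rule triangular_array_row_mgf(2))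
  define v where "v n = expectation (\<lambda>\<omega>. (X n 1 \<omega>)\<^sup>2)" for n
  define z where "z n = expectation (\<lambda>\<omega>. exp (\<theta> * sqrt (G n / n) * X n 1 \<omega>)) - 1" for n
  have good: "\<forall>\<^sub>F n in sequentially. 2 \<le> n \<and> 0 < G n \<and> \<bar>\<theta>\<bar> * \<tau> n \<le> 1"
    using eventually_ge_at_top[of 2] G[unfolded filterlim_at_top_dense, rule_format, of 0]
      order_tendstoD(2)[OF tendsto_mult_right_zero[OF \<tau>, of "\<bar>\<theta>\<bar>"] zero_less_one]
    by eventually_elim (simp add: mult.commute)
  have est: "\<forall>\<^sub>F n in sequentially. \<bar>n / G n * z n - \<theta>\<^sup>2 * v n / 2\<bar> \<le> \<bar>\<theta>\<bar> * \<tau> n * (\<theta>\<^sup>2 * v n)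
               \<and> \<bar>z n\<bar> \<le> 3 / 2 * (\<bar>\<theta>\<bar> * \<tau> n)\<^sup>2"
    using good
  proof eventually_elim
    case (elim n)
    then have "AE \<omega> in M. \<bar>X n 1 \<omega>\<bar> \<le> \<tau> n / sqrt (G n / n)"
      using bound by (simp add: real_sqrt_divide)
    from mgf_centered_bounded_scaled[OF X1 mean0 this, where \<theta> = \<theta>] elim
    show ?case
      by (simp add: z_def v_def mult.commute)
  qed
  have "z \<longlonglongrightarrow> 0"
  proof (rule Lim_null_comparison)
    show "\<forall>\<^sub>F n in sequentially. norm (z n) \<le> 3 / 2 * (\<bar>\<theta>\<bar> * \<tau> n)\<^sup>2"
      using est by eventually_elim simp
  qed (use \<tau> in \<open>auto intro!: tendsto_eq_intros\<close>)
  moreover have "((\<lambda>n. n / G n * z n) \<longlongrightarrow> \<theta>\<^sup>2 * \<sigma>\<^sup>2 / 2) sequentially"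
  proof (rule Lim_transform[OF _ Lim_null_comparison])
    show "((\<lambda>n. \<theta>\<^sup>2 * v n / 2) \<longlongrightarrow> \<theta>\<^sup>2 * \<sigma>\<^sup>2 / 2) sequentially"
      using var by (auto intro!: tendsto_eq_intros simp: v_def)
    show "\<forall>\<^sub>F n in sequentially. norm (n / G n * z n - \<theta>\<^sup>2 * v n / 2) \<le> \<bar>\<theta>\<bar> * \<tau> n * (\<theta>\<^sup>2 * v n)"
      using est by eventually_elim simp
  qed (use \<tau> var in \<open>auto intro!: tendsto_eq_intros simp: v_def\<close>)
  ultimately have "((\<lambda>n. n / G n * ln (1 + z n)) \<longlongrightarrow> \<theta>\<^sup>2 * \<sigma>\<^sup>2 / 2) sequentially"
    by (rule tendsto_mult_ln_one_plus)
  moreover have "\<forall>\<^sub>F n in sequentially. n / G n * ln (1 + z n)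
      = ln (expectation (\<lambda>\<omega>. exp (\<theta> * (sqrt (G n / n) * (\<Sum>i=1..n. X n i \<omega>))))) / G n"
    using good
  proof eventually_elim
    case (elim n)
    then have "expectation (\<lambda>\<omega>. exp (\<theta> * (sqrt (G n / n) * (\<Sum>i=1..n. X n i \<omega>)))) = (1 + z n) ^ n"
      using row_mgf[of n "\<theta> * sqrt (G n / n)"] by (simp add: z_def mult.assoc)
    then show ?case
      by (simp add: ln_realpow)
  qed
  ultimately show ?thesis
    by (rule Lim_transform_eventually)
qed

theorem triangular_array_moderate_deviations:
  fixes X :: "nat \<Rightarrow> nat \<Rightarrow> 'a \<Rightarrow> real" and G \<tau> :: "nat \<Rightarrow> real"
  assumes indep: "\<And>n. 2 \<le> n \<Longrightarrow> indep_vars (\<lambda>_. borel) (X n) {1..n}"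
    and ident: "\<And>n i. 2 \<le> n \<Longrightarrow> i \<in> {1..n} \<Longrightarrow> distr M borel (X n i) = distr M borel (X n 1)"
    and mean0: "\<And>n. 2 \<le> n \<Longrightarrow> expectation (X n 1) = 0"
    and var: "((\<lambda>n. expectation (\<lambda>\<omega>. (X n 1 \<omega>)\<^sup>2)) \<longlongrightarrow> \<sigma>\<^sup>2) sequentially" and \<sigma>: "0 < \<sigma>"
    and G: "filterlim G at_top sequentially" and \<tau>: "\<tau> \<longlonglongrightarrow> 0"
    and bound: "\<And>n. 2 \<le> n \<Longrightarrow> AE \<omega> in M. \<bar>X n 1 \<omega>\<bar> \<le> \<tau> n * sqrt (n / G n)"
    and r: "0 < r"
  defines "S n \<omega> \<equiv> \<Sum>i=1..n. X n i \<omega>"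
  shows "((\<lambda>n. ln (prob {\<omega> \<in> space M. S n \<omega> > r * sqrt (n * G n)}) / G n)
           \<longlongrightarrow> - r\<^sup>2 / (2 * \<sigma>\<^sup>2)) sequentially"
    and "((\<lambda>n. ln (prob {\<omega> \<in> space M. S n \<omega> < - r * sqrt (n * G n)}) / G n)
           \<longlongrightarrow> - r\<^sup>2 / (2 * \<sigma>\<^sup>2)) sequentially"
    and "((\<lambda>n. ln (prob {\<omega> \<in> space M. \<bar>S n \<omega>\<bar> > r * sqrt (n * G n)}) / G n)
           \<longlongrightarrow> - r\<^sup>2 / (2 * \<sigma>\<^sup>2)) sequentially"
proof -
  have Z: "\<forall>\<^sub>F n in sequentially. random_variable borel (\<lambda>\<omega>. sqrt (G n / n) * S n \<omega>)
             \<and> (\<forall>\<theta>. integrable M (\<lambda>\<omega>. exp (\<theta> * (sqrt (G n / n) * S n \<omega>))))"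
    unfolding S_def using indep ident bound by (rule triangular_array_row_mgf(1))
  have cgf: "((\<lambda>n. ln (expectation (\<lambda>\<omega>. exp (\<theta> * (sqrt (G n / n) * S n \<omega>)))) / G n)
               \<longlongrightarrow> \<theta>\<^sup>2 * \<sigma>\<^sup>2 / 2) sequentially" for \<theta>
    unfolding S_def using indep ident mean0 var G \<tau> bound by (rule triangular_array_cgf_limit)
  interpret quadratic_cgf_limit M "\<lambda>n \<omega>. sqrt (G n / n) * S n \<omega>" sequentially G "\<sigma>\<^sup>2"
    using Z G cgf \<sigma> by unfold_locales simp_all
  note tails = ldp_right_tail(2)[OF r] ldp_left_tail(2)[OF r] ldp_abs[OF r]
  have pos: "\<forall>\<^sub>F n in sequentially. 0 < G n \<and> 0 < real n"
    using eventually_gt_at_top[of 0] G[unfolded filterlim_at_top_dense, rule_format, of 0]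
    by eventually_elim simp
  show "((\<lambda>n. ln (prob {\<omega> \<in> space M. S n \<omega> > r * sqrt (n * G n)}) / G n)
          \<longlongrightarrow> - r\<^sup>2 / (2 * \<sigma>\<^sup>2)) sequentially"
    using tails(1) pos by (rule Lim_transform_eventually[OF _ eventually_mono]) (simp add: sqrt_scaled_less_iff)
  show "((\<lambda>n. ln (prob {\<omega> \<in> space M. S n \<omega> < - r * sqrt (n * G n)}) / G n)
          \<longlongrightarrow> - r\<^sup>2 / (2 * \<sigma>\<^sup>2)) sequentially"
    using tails(2) pos by (rule Lim_transform_eventually[OF _ eventually_mono]) (simp add: sqrt_scaled_less_iff)
  show "((\<lambda>n. ln (prob {\<omega> \<in> space M. \<bar>S n \<omega>\<bar> > r * sqrt (n * G n)}) / G n)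
          \<longlongrightarrow> - r\<^sup>2 / (2 * \<sigma>\<^sup>2)) sequentially"
    using tails(3) pos by (rule Lim_transform_eventually[OF _ eventually_mono]) (simp add: sqrt_scaled_less_iff)
qed

end

theorem lemma3p4:
  fixes M :: "'a measure" and X :: "nat \<Rightarrow> nat \<Rightarrow> 'a \<Rightarrow> real"
    and \<sigma> \<rho> :: real and g :: "real \<Rightarrow> real" and \<tau> :: "nat \<Rightarrow> real"
  assumes P: "prob_space M"
    and meas: "\<And>n i. n \<ge> 2 \<Longrightarrow> i \<in> {1..n} \<Longrightarrow> X n i \<in> borel_measurable M"
    and indep: "\<And>n. n \<ge> 2 \<Longrightarrow> prob_space.indep_vars M (\<lambda>_. borel) (X n) {1..n}"
    and ident: "\<And>n i. n \<ge> 2 \<Longrightarrow> i \<in> {1..n} \<Longrightarrow> distr M borel (X n i) = distr M borel (X n 1)"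
    and mean0: "\<And>n. n \<ge> 2 \<Longrightarrow> integral\<^sup>L M (X n 1) = 0"
    and var: "((\<lambda>n. integral\<^sup>L M (\<lambda>\<omega>. (X n 1 \<omega>)\<^sup>2)) \<longlongrightarrow> \<sigma>\<^sup>2) sequentially"
    and \<sigma>pos: "\<sigma> > 0"
    and \<rho>: "\<rho> \<ge> 0"
    and g: "regvar_class \<rho> g"
    and \<tau>pos: "\<And>n. n \<ge> 2 \<Longrightarrow> \<tau> n > 0"
    and \<tau>lim: "\<tau> \<longlonglongrightarrow> 0"
    and bound: "\<And>n. n \<ge> 2 \<Longrightarrow>
                  AE \<omega> in M. \<bar>X n 1 \<omega>\<bar> \<le> \<tau> n * sqrt (real n / g (ln (real n)))"
    and r: "r > (0::real)"
  shows "((\<lambda>n. ln (measure M {\<omega> \<in> space M. (\<Sum>i=1..n. X n i \<omega>) > r * sqrt (real n * g (ln (real n)))})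
                / g (ln (real n))) \<longlongrightarrow> - r\<^sup>2 / (2 * \<sigma>\<^sup>2)) sequentially
       \<and> ((\<lambda>n. ln (measure M {\<omega> \<in> space M. (\<Sum>i=1..n. X n i \<omega>) < - r * sqrt (real n * g (ln (real n)))})
                / g (ln (real n))) \<longlongrightarrow> - r\<^sup>2 / (2 * \<sigma>\<^sup>2)) sequentially
       \<and> ((\<lambda>n. ln (measure M {\<omega> \<in> space M. \<bar>\<Sum>i=1..n. X n i \<omega>\<bar> > r * sqrt (real n * g (ln (real n)))})
                / g (ln (real n))) \<longlongrightarrow> - r\<^sup>2 / (2 * \<sigma>\<^sup>2)) sequentially"
proof -
  interpret prob_space M
    by (rule P)
  have "filterlim g at_top at_top"
    using g unfolding regvar_class_def by blast
  then have G: "filterlim (\<lambda>n. g (ln (real n))) at_top sequentially"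
    by (rule filterlim_compose[OF _ filterlim_compose[OF ln_at_top filterlim_real_sequentially]])
  show ?thesis
    using indep ident mean0 var \<sigma>pos G \<tau>lim bound r
    by (intro conjI; rule triangular_array_moderate_deviations)
qed

end
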